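(* Let $R$ be a commutative multiplicative hyperring with identity having the zero absorbing property, and let $\alpha$ be a good endomorphism of $R$. Then $\mathrm{Nil}_\alpha(R)\subseteq\sqrt[\alpha]{\langle 0\rangle}$.
   Context: A multiplicative hyperring is an abelian group $(R,+)$ with a hyperoperation $\circ:R\times R\to \mathcal P^*(R)$ (nonempty subsets) such that $a\circ(b\circ c)=(a\circ b)\circ c$, $a\circ(b+c)\subseteq a\circ b+a\circ c$, $(b+c)\circ a\subseteq b\circ a+c\circ a$, and $a\circ(-b)=(-a)\circ b=-(a\circ b)$. Products of subsets are unions of elementwise products, and $x^n=x\circ\cdots\circ x$ ($n$ factors). Commutative means $a\circ b=b\circ a$. An identity $1$ satisfies $a\in1\circ a$ for all $a$. $R$ has the zero absorbing property if $0\circ r=r\circ 0=\{0\}$ for all $r$. A hyperideal is a nonempty $I$ closed under subtraction with $r\circ x\subseteq I$ for $r\in R$, $x\in I$. Standing assumption: all hyperideals are $\mathbf C$-hyperideals, i.e. for every finite product $A=r_1\circ\cdots\circ r_n$, $A\cap I\ne\emptyset$ implies $A\subseteq I$. $\langle 0\rangle$ is the hyperideal generated by $0$. A good endomorphism $\alpha$ satisfies $\alpha(x+y)=\alpha(x)+\alpha(y)$ and $\alpha(x\circ y)=\alpha(x)\circ\alpha(y)$; it is applied to sets elementwise. An element $x$ is $\alpha$-nilpotent if $0\in\alpha(x^n)$ for some integer $n>0$, and $\mathrm{Nil}_\alpha(R)$ is the set of $\alpha$-nilpotent elements. For a hyperideal $J$ (with $R$ having the zero absorbing property), the $\alpha$-radical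 is $\sqrt[\alpha]{J}=\{r\in R:\alpha(r^n)\subseteq J\text{ for some }n\in\mathbb N\}$. *)

theory Defs
  imports Main
begin

text \<open>A hyperoperation on the abelian group (type) 'a is a function
  mult :: 'a => 'a => 'a set. The carrier R is the whole type 'a.\<close>

definition setprod :: "('a \<Rightarrow> 'a \<Rightarrow> 'a set) \<Rightarrow> 'a set \<Rightarrow> 'a set \<Rightarrow> 'a set" where
  "setprod mult A B = (\<Union>a\<in>A. \<Union>b\<in>B. mult a b)"

definition setsum :: "'a::ab_group_add set \<Rightarrow> 'a set \<Rightarrow> 'a set" where
  "setsum A B = {a + b | a b. a \<in> A \<and> b \<in> B}"

definition mult_hyperring :: "('a::ab_group_add \<Rightarrow> 'a \<Rightarrow> 'a set) \<Rightarrow> bool" where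
  "mult_hyperring mult \<longleftrightarrow>
     (\<forall>a b. mult a b \<noteq> {}) \<and>
     (\<forall>a b c. setprod mult {a} (mult b c) = setprod mult (mult a b) {c}) \<and>
     (\<forall>a b c. mult a (b + c) \<subseteq> setsum (mult a b) (mult a c)) \<and>
     (\<forall>a b c. mult (b + c) a \<subseteq> setsum (mult b a) (mult c a)) \<and>
     (\<forall>a b. mult a (- b) = uminus ` (mult a b) \<and> mult (- a) b = uminus ` (mult a b))"

definition hr_commutative :: "('a \<Rightarrow> 'a \<Rightarrow> 'a set) \<Rightarrow> bool" where
  "hr_commutative mult \<longleftrightarrow> (\<forall>a b. mult a b = mult b a)"

definition hr_has_identity :: "('a \<Rightarrow> 'a \<Rightarrow> 'a set) \<Rightarrow> bool" where
  "hr_has_identity mult \<longleftrightarrow> (\<exists>one. \<forall>a. a \<in> mult one a)"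

definition zero_absorbing :: "('a::zero \<Rightarrow> 'a \<Rightarrow> 'a set) \<Rightarrow> bool" where
  "zero_absorbing mult \<longleftrightarrow> (\<forall>r. mult 0 r = {0} \<and> mult r 0 = {0})"

fun lprod :: "('a \<Rightarrow> 'a \<Rightarrow> 'a set) \<Rightarrow> 'a list \<Rightarrow> 'a set" where
  "lprod mult [] = {}"
| "lprod mult [r] = {r}"
| "lprod mult (r # rs) = setprod mult {r} (lprod mult rs)"

text \<open>hpow mult x n = x^n (n factors), meaningful for n >= 1.\<close>
fun hpow :: "('a \<Rightarrow> 'a \<Rightarrow> 'a set) \<Rightarrow> 'a \<Rightarrow> nat \<Rightarrow> 'a set" where
  "hpow mult x 0 = {x}"
| "hpow mult x (Suc 0) = {x}"
| "hpow mult x (Suc (Suc n)) = setprod mult (hpow mult x (Suc n)) {x}"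

definition hyperideal :: "('a::ab_group_add \<Rightarrow> 'a \<Rightarrow> 'a set) \<Rightarrow> 'a set \<Rightarrow> bool" where
  "hyperideal mult I \<longleftrightarrow> I \<noteq> {} \<and> (\<forall>x\<in>I. \<forall>y\<in>I. x - y \<in> I) \<and>
     (\<forall>r. \<forall>x\<in>I. mult r x \<subseteq> I)"

definition C_hyperideal :: "('a::ab_group_add \<Rightarrow> 'a \<Rightarrow> 'a set) \<Rightarrow> 'a set \<Rightarrow> bool" where
  "C_hyperideal mult I \<longleftrightarrow> hyperideal mult I \<and>
     (\<forall>rs. rs \<noteq> [] \<longrightarrow> lprod mult rs \<inter> I \<noteq> {} \<longrightarrow> lprod mult rs \<subseteq> I)"

definition hyperideal_gen :: "('a::ab_group_add \<Rightarrow> 'a \<Rightarrow> 'a set) \<Rightarrow> 'a set \<Rightarrow> 'a set" where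
  "hyperideal_gen mult S = \<Inter>{I. hyperideal mult I \<and> S \<subseteq> I}"

definition good_endo :: "('a::ab_group_add \<Rightarrow> 'a \<Rightarrow> 'a set) \<Rightarrow> ('a \<Rightarrow> 'a) \<Rightarrow> bool" where
  "good_endo mult \<alpha> \<longleftrightarrow> (\<forall>x y. \<alpha> (x + y) = \<alpha> x + \<alpha> y) \<and>
     (\<forall>x y. \<alpha> ` (mult x y) = mult (\<alpha> x) (\<alpha> y))"

definition Nil_alpha :: "('a::zero \<Rightarrow> 'a \<Rightarrow> 'a set) \<Rightarrow> ('a \<Rightarrow> 'a) \<Rightarrow> 'a set" where
  "Nil_alpha mult \<alpha> = {x. \<exists>n>0. 0 \<in> \<alpha> ` hpow mult x n}"

definition alpha_radical :: "('a \<Rightarrow> 'a \<Rightarrow> 'a set) \<Rightarrow> ('a \<Rightarrow> 'a) \<Rightarrow> 'a set \<Rightarrow> 'a set" where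
  "alpha_radical mult \<alpha> J = {r. \<exists>n>0. \<alpha> ` hpow mult r n \<subseteq> J}"

end

theory Submission
  imports Defs
begin

text \<open>Zero absorption makes \<open>{0}\<close> a hyperideal, so \<open>\<langle>0\<rangle> = {0}\<close>. Since \<open>\<alpha>\<close> is good,
  \<open>\<alpha>(x\<^sup>n) = (\<alpha> x)\<^sup>n\<close> is a finite product, and the \<open>C\<close>-property of \<open>{0}\<close> turns
  \<open>0 \<in> \<alpha>(x\<^sup>n)\<close> into \<open>\<alpha>(x\<^sup>n) \<subseteq> {0}\<close>.\<close>

lemma zero_absorbing_hyperideal_zero:
  assumes "zero_absorbing mult"
  shows "hyperideal mult {0}"
  using assms unfolding hyperideal_def zero_absorbing_def by auto

lemma hyperideal_gen_zero:
  assumes "zero_absorbing mult"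
  shows "hyperideal_gen mult {0} = {0}"
  using zero_absorbing_hyperideal_zero[OF assms] unfolding hyperideal_gen_def by auto

lemma hpow_eq_lprod_replicate:
  assumes "hr_commutative mult"
  shows "hpow mult x (Suc n) = lprod mult (replicate (Suc n) x)"
proof (induction n)
  case 0
  then show ?case by simp
next
  case (Suc n)
  have "hpow mult x (Suc (Suc n)) = setprod mult (hpow mult x (Suc n)) {x}" by simp
  also have "\<dots> = setprod mult {x} (hpow mult x (Suc n))"
    using assms unfolding setprod_def hr_commutative_def by blast
  finally show ?case using Suc by simp
qed

lemma image_hpow:
  assumes "good_endo mult \<alpha>"
  shows "\<alpha> ` hpow mult x (Suc n) = hpow mult (\<alpha> x) (Suc n)"
proof (induction n)
  case 0
  then show ?case by simp
next
  case (Suc n)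
  have "\<alpha> ` hpow mult x (Suc (Suc n)) = (\<Union>a\<in>hpow mult x (Suc n). \<alpha> ` mult a x)"
    by (simp add: setprod_def image_UN)
  also have "\<dots> = (\<Union>a\<in>hpow mult x (Suc n). mult (\<alpha> a) (\<alpha> x))"
    using assms unfolding good_endo_def by simp
  also have "\<dots> = setprod mult (\<alpha> ` hpow mult x (Suc n)) {\<alpha> x}"
    by (simp add: setprod_def)
  finally show ?case using Suc by simp
qed

lemma C_hyperideal_hpow_subset:
  assumes "hr_commutative mult" and "C_hyperideal mult I"
    and "hpow mult x (Suc n) \<inter> I \<noteq> {}"
  shows "hpow mult x (Suc n) \<subseteq> I"
  using assms unfolding C_hyperideal_def hpow_eq_lprod_replicate[OF assms(1)]
  by (metis replicate_Suc list.distinct(1))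

theorem mainTheorem12:
  fixes mult :: "'a::ab_group_add \<Rightarrow> 'a \<Rightarrow> 'a set" and \<alpha> :: "'a \<Rightarrow> 'a"
  assumes "mult_hyperring mult"
    and "hr_commutative mult"
    and "hr_has_identity mult"
    and "zero_absorbing mult"
    and "\<forall>I. hyperideal mult I \<longrightarrow> C_hyperideal mult I"
    and "good_endo mult \<alpha>"
  shows "Nil_alpha mult \<alpha> \<subseteq> alpha_radical mult \<alpha> (hyperideal_gen mult {0})"
proof
  fix x assume "x \<in> Nil_alpha mult \<alpha>"
  then obtain k where "k > 0" and zero_in_k: "0 \<in> \<alpha> ` hpow mult x k"
    unfolding Nil_alpha_def by blast
  then obtain n where "k = Suc n"
    using gr0_implies_Suc by blast
  with zero_in_k have zero_in: "0 \<in> \<alpha> ` hpow mult x (Suc n)"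
    by simp
  have C_zero: "C_hyperideal mult {0}"
    using assms(5) zero_absorbing_hyperideal_zero[OF assms(4)] by blast
  have "\<alpha> ` hpow mult x (Suc n) \<subseteq> {0}"
    using C_hyperideal_hpow_subset[OF assms(2) C_zero] zero_in
    unfolding image_hpow[OF assms(6)] by blast
  then show "x \<in> alpha_radical mult \<alpha> (hyperideal_gen mult {0})"
    unfolding alpha_radical_def hyperideal_gen_zero[OF assms(4)]
    using zero_less_Suc by blast
qed

end
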